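(* Let $p>5$ be a prime, $q=p^h$, and let $\mathcal{F}$ be the projective closure of the affine curve $ax^n+by^m=1$ defined over $\mathbb{F}_q$, where $a,b\in\mathbb{F}_q^*$ and $m,n$ are positive integers with $n\ge m>2$ and $p\nmid mn$. Then $\mathcal{F}$ is nonclassical with respect to the linear system $\Sigma_2$ of conics if and only if one of the following holds: (a) $p\mid (m-2)$ and $p\mid (n-2)$; (b) $p\mid (m+1)$ and $p\mid (n+1)$; (c) $p\mid (2m-1)$ and $p\mid (2n-1)$; (d) $p\mid (m-1)$ and $p\mid (n-1)(n-2)(2n-1)(n+1)$; (e) $p\mid (n-1)$ and $p\mid (m+1)(m-2)(2m-1)$.
   Context: For a geometrically irreducible projective plane curve $\mathcal{F}$ over $\mathbb{F}_q$ with function field $\overline{\mathbb{F}}_q(\mathcal{F})=\overline{\mathbb{F}}_q(x,y)$ and an integer $s\ge1$, let $\Sigma_s$ be the linear system of plane curves of degree $s$, $M=\binom{s+2}{2}-1$, and $\varphi_0,\dots,\varphi_M$ the monomials of degree $s$ in $x,y,1$. For a separating element $\tau$ and Hasse derivatives $D^{(k)}_\tau$, the order sequence $\varepsilon_0<\dots<\varepsilon_M$ of $\mathcal{F}$ with respect to $\Sigma_s$ is the lexicographically smallest sequence of nonnegative integers with $\det(D_\tau^{(\varepsilon_i)}\varphi_j)_{i,j=0}^M\neq0$. $\mathcal{F}$ is classical with respect to $\Sigma_s$ if $\varepsilon_i=i$ for all $i$, and nonclassical otherwise. $\Sigma_2$ is the system of conics. *)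

theory Defs
  imports "Jordan_Normal_Form.Determinant" "HOL-Computational_Algebra.Polynomial"
begin

text \<open>All objects live inside one ambient field 'K, which plays the role of the
function field of the curve; the constant field is a subset k of 'K.\<close>

definition subfield :: "'K::field set \<Rightarrow> bool" where
  "subfield F \<longleftrightarrow> 0 \<in> F \<and> 1 \<in> F \<and> (\<forall>u\<in>F. \<forall>v\<in>F. u + v \<in> F \<and> u * v \<in> F)
     \<and> (\<forall>u\<in>F. - u \<in> F \<and> inverse u \<in> F)"

definition field_generated :: "'K::field set \<Rightarrow> 'K set" where
  "field_generated S = \<Inter>{F. S \<subseteq> F \<and> subfield F}"

definition algebraically_closed_subfield :: "'K::field set \<Rightarrow> bool" where
  "algebraically_closed_subfield k \<longleftrightarrow> subfield k \<and>
     (\<forall>f :: 'K poly. set (coeffs f) \<subseteq> k \<longrightarrow> degree f \<ge> 1 \<longrightarrow> (\<exists>r\<in>k. poly f r = 0))"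

definition transcendental_over :: "'K::field set \<Rightarrow> 'K \<Rightarrow> bool" where
  "transcendental_over k t \<longleftrightarrow>
     (\<forall>f :: 'K poly. set (coeffs f) \<subseteq> k \<longrightarrow> f \<noteq> 0 \<longrightarrow> poly f t \<noteq> 0)"

text \<open>Hasse derivatives D i = D^{(i)}_\<tau> with respect to \<tau> on the function field,
  trivial on the constant field k (iterative Hasse--Schmidt derivation).\<close>
definition hasse_derivatives :: "'K::field set \<Rightarrow> 'K \<Rightarrow> (nat \<Rightarrow> 'K \<Rightarrow> 'K) \<Rightarrow> bool" where
  "hasse_derivatives k \<tau> D \<longleftrightarrow>
     (\<forall>f. D 0 f = f) \<and>
     (\<forall>i f g. D i (f + g) = D i f + D i g) \<and>
     (\<forall>i f g. D i (f * g) = (\<Sum>j\<le>i. D j f * D (i - j) g)) \<and>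
     (\<forall>i j f. D i (D j f) = of_nat ((i + j) choose i) * D (i + j) f) \<and>
     (\<forall>i\<ge>1. \<forall>c\<in>k. D i c = 0) \<and>
     D 1 \<tau> = 1 \<and> (\<forall>i\<ge>2. D i \<tau> = 0)"

text \<open>The monomials of degree s in x, y, 1 (dehomogenised): x^i y^j with i + j \<le> s.
  Their number is M + 1 = (s+2 choose 2).\<close>
definition monomials :: "nat \<Rightarrow> 'K::field \<Rightarrow> 'K \<Rightarrow> 'K list" where
  "monomials s x y = [x ^ i * y ^ j. i \<leftarrow> [0..<s+1], j \<leftarrow> [0..<s+1-i]]"

definition hasse_matrix :: "(nat \<Rightarrow> 'K::field \<Rightarrow> 'K) \<Rightarrow> 'K list \<Rightarrow> nat list \<Rightarrow> 'K mat" where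
  "hasse_matrix D \<phi> \<epsilon> = mat (length \<phi>) (length \<phi>) (\<lambda>(i, j). D (\<epsilon> ! i) (\<phi> ! j))"

definition admissible_orders :: "(nat \<Rightarrow> 'K::field \<Rightarrow> 'K) \<Rightarrow> 'K list \<Rightarrow> nat list set" where
  "admissible_orders D \<phi> = {\<epsilon>. length \<epsilon> = length \<phi> \<and> sorted_wrt (<) \<epsilon> \<and>
      det (hasse_matrix D \<phi> \<epsilon>) \<noteq> 0}"

definition is_order_sequence :: "(nat \<Rightarrow> 'K::field \<Rightarrow> 'K) \<Rightarrow> 'K list \<Rightarrow> nat list \<Rightarrow> bool" where
  "is_order_sequence D \<phi> \<epsilon> \<longleftrightarrow> \<epsilon> \<in> admissible_orders D \<phi> \<and>
     (\<forall>\<epsilon>'\<in>admissible_orders D \<phi>. \<epsilon>' = \<epsilon> \<or> (\<epsilon>, \<epsilon>') \<in> lexord {(u, v). u < v})"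

definition classical :: "(nat \<Rightarrow> 'K::field \<Rightarrow> 'K) \<Rightarrow> 'K list \<Rightarrow> bool" where
  "classical D \<phi> \<longleftrightarrow> is_order_sequence D \<phi> [0..<length \<phi>]"

definition nonclassical :: "(nat \<Rightarrow> 'K::field \<Rightarrow> 'K) \<Rightarrow> 'K list \<Rightarrow> bool" where
  "nonclassical D \<phi> \<longleftrightarrow> \<not> classical D \<phi>"

end

theory Submission
  imports Defs "HOL-Computational_Algebra.Primes"
begin

text \<open>Since p > 5, the Hasse derivatives of order at most 5 are D^(i) = (D^(1))^i / i!.
  Rescaling D^(1) to the derivation d with d x = 1 multiplies the matrix (D^(i) phi_j) by a
  triangular matrix with nonzero diagonal, so the curve is classical for conics iff the Wronskian
  of 1, y, y^2, x, x y, x^2 with respect to d is nonzero, and this Wronskian equals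
  4 y_2 (9 y_2^2 y_5 - 45 y_2 y_3 y_4 + 40 y_3^3) with y_i = d^i y.
  Implicit differentiation of a x^n + b y^m = 1 gives y_i = y P_i(u) / (m x (1 - u))^i, where
  u = a x^n and the coefficients of the polynomial P_i are polynomials in n and m. Hence the
  Wronskian is a nonzero multiple of W(u) for an explicit polynomial W of degree 11, and as u is
  transcendental over the constants, the curve is nonclassical iff all coefficients of W vanish.
  Two of them split into linear factors in n and m, which leaves sixteen candidate pairs (n, m)
  in the prime field; they are checked one by one.\<close>

subsection \<open>Subfields, polynomials over them, and transcendence\<close>

context
  fixes F :: "'K::field set"
  assumes F: "subfield F"
begin

lemma subfield_0: "0 \<in> F"
  and subfield_1: "1 \<in> F"
  and subfield_add: "u \<in> F \<Longrightarrow> v \<in> F \<Longrightarrow> u + v \<in> F"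
  and subfield_mult: "u \<in> F \<Longrightarrow> v \<in> F \<Longrightarrow> u * v \<in> F"
  and subfield_uminus: "u \<in> F \<Longrightarrow> - u \<in> F"
  using F by (auto simp: subfield_def)

lemma subfield_diff: "u \<in> F \<Longrightarrow> v \<in> F \<Longrightarrow> u - v \<in> F"
  using subfield_add subfield_uminus by (metis diff_conv_add_uminus)

lemma subfield_of_nat: "of_nat n \<in> F"
  by (induction n) (auto intro: subfield_0 subfield_1 subfield_add)

lemma subfield_numeral: "numeral w \<in> F"
  using subfield_of_nat[of "numeral w"] by simp

end

definition poly_over :: "'a::zero set \<Rightarrow> 'a poly \<Rightarrow> bool" where
  "poly_over F p \<longleftrightarrow> (\<forall>i. coeff p i \<in> F)"

lemma poly_over_pCons_iff [simp]: "poly_over F (pCons a p) \<longleftrightarrow> a \<in> F \<and> poly_over F p"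
  by (auto simp: poly_over_def coeff_pCons split: nat.splits)

context
  fixes F :: "'K::field set"
  assumes F: "subfield F"
begin

lemma poly_over_0 [simp]: "poly_over F 0"
  and poly_over_1 [simp]: "poly_over F 1"
  using subfield_0[OF F] subfield_1[OF F] by (auto simp: poly_over_def)

lemma coeffs_subset_iff_poly_over: "set (coeffs p) \<subseteq> F \<longleftrightarrow> poly_over F p"
proof -
  have "poly_over F p \<longleftrightarrow> range (coeff p) \<subseteq> F"
    by (auto simp: poly_over_def)
  then show ?thesis
    using subfield_0[OF F] by (simp add: range_coeff)
qed

lemma poly_over_add: "poly_over F p \<Longrightarrow> poly_over F q \<Longrightarrow> poly_over F (p + q)"
  and poly_over_diff: "poly_over F p \<Longrightarrow> poly_over F q \<Longrightarrow> poly_over F (p - q)"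
  and poly_over_smult: "c \<in> F \<Longrightarrow> poly_over F p \<Longrightarrow> poly_over F (smult c p)"
  and poly_over_pderiv: "poly_over F p \<Longrightarrow> poly_over F (pderiv p)"
  by (auto simp: poly_over_def coeff_pderiv
      intro: subfield_add[OF F] subfield_diff[OF F] subfield_mult[OF F] subfield_1[OF F]
        subfield_of_nat[OF F])

lemma poly_over_mult: "poly_over F p \<Longrightarrow> poly_over F q \<Longrightarrow> poly_over F (p * q)"
  unfolding poly_over_def
  by (blast intro: coeff_mult_semiring_closed subfield_0[OF F] subfield_add[OF F] subfield_mult[OF F])

lemma poly_over_power: "poly_over F p \<Longrightarrow> poly_over F (p ^ n)"
  by (induction n) (auto intro: poly_over_mult)

lemma poly_over_pcompose: "poly_over F p \<Longrightarrow> poly_over F q \<Longrightarrow> poly_over F (pcompose p q)"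
  unfolding poly_over_def
  by (blast intro: coeff_pcompose_semiring_closed subfield_0[OF F] subfield_add[OF F] subfield_mult[OF F])

end

lemma transcendental_over_poly_eq_0_iff:
  assumes "subfield k" "transcendental_over k t" "poly_over k p"
  shows "poly p t = 0 \<longleftrightarrow> p = 0"
  using assms by (auto simp: transcendental_over_def coeffs_subset_iff_poly_over)

lemma transcendental_over_poly:
  assumes k: "subfield k" and t: "transcendental_over k t"
    and q: "poly_over k q" "degree q > 0"
  shows "transcendental_over k (poly q t)"
  unfolding transcendental_over_def
proof (intro allI impI)
  fix f :: "'a poly" assume f: "set (coeffs f) \<subseteq> k" "f \<noteq> 0"
  have "poly_over k (pcompose f q)"
    using f(1) q(1) by (simp add: coeffs_subset_iff_poly_over[OF k] poly_over_pcompose[OF k])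
  moreover have "pcompose f q \<noteq> 0"
    using f(2) q(2) pcompose_eq_0 by blast
  ultimately show "poly f (poly q t) \<noteq> 0"
    using transcendental_over_poly_eq_0_iff[OF k t] by (simp flip: poly_pcompose)
qed

lemma transcendental_over_monomial:
  assumes "subfield k" "transcendental_over k t" "a \<in> k" "a \<noteq> 0" "0 < n"
  shows "transcendental_over k (a * t ^ n)"
  using transcendental_over_poly[OF assms(1,2), of "monom a n"] assms(1,3-5)
  by (simp add: poly_monom poly_over_def coeff_monom subfield_0 degree_monom_eq)

lemma transcendental_over_not_in:
  assumes k: "subfield k" and t: "transcendental_over k t" and c: "c \<in> k"
  shows "t \<noteq> c"
proof
  assume "t = c"
  moreover have "poly_over k [:- c, 1:]"
    using c by (simp add: k subfield_uminus[OF k] subfield_1[OF k])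
  ultimately show False
    using transcendental_over_poly_eq_0_iff[OF k t] by fastforce
qed

subsection \<open>Derivations and Hasse derivatives\<close>

locale derivation =
  fixes k :: "'K::field set" and d :: "'K \<Rightarrow> 'K"
  assumes subfield: "subfield k"
    and d_add: "d (f + g) = d f + d g"
    and d_mult: "d (f * g) = f * d g + d f * g"
    and d_const: "c \<in> k \<Longrightarrow> d c = 0"
begin

lemma d_0 [simp]: "d 0 = 0"
  and d_1 [simp]: "d 1 = 0"
  and d_of_nat [simp]: "d (of_nat n) = 0"
  and d_numeral [simp]: "d (numeral w) = 0"
  by (simp_all add: d_const subfield_0 subfield_1 subfield_of_nat subfield_numeral subfield)

lemma d_uminus: "d (- f) = - d f"
  using d_add[of f "- f"] by (simp add: eq_neg_iff_add_eq_0 add.commute)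

lemma d_diff: "d (f - g) = d f - d g"
  using d_add[of f "- g"] by (simp add: d_uminus)

lemma d_cmult: "c \<in> k \<Longrightarrow> d (c * f) = c * d f"
  by (simp add: d_mult d_const)

lemma d_power: "d (f ^ n) = of_nat n * f ^ (n - 1) * d f"
proof (induction n)
  case (Suc n)
  then show ?case
    by (cases n) (simp_all add: d_mult algebra_simps)
qed simp

lemma d_inverse: "d (inverse f) = - d f / f ^ 2"
proof (cases "f = 0")
  case False
  have "f * d (inverse f) + d f * inverse f = 0"
    using d_mult[of f "inverse f"] False by simp
  then have "f * d (inverse f) = - (d f * inverse f)"
    by (simp add: eq_neg_iff_add_eq_0)
  then show ?thesis
    using False by (simp add: field_simps power2_eq_square)
qed simp

lemma d_divide: "d (f / g) = (d f * g - f * d g) / g ^ 2"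
proof (cases "g = 0")
  case False
  have "d (f / g) = f * (- d g / g ^ 2) + d f * inverse g"
    by (simp only: divide_inverse d_mult d_inverse)
  then show ?thesis
    using False by (simp add: field_simps power2_eq_square)
qed simp

lemma d_divide_power:
  assumes "V \<noteq> 0"
  shows "d (f / V ^ i) = (d f * V - of_nat i * f * d V) / V ^ Suc i"
proof -
  have "d (f / V ^ i) = (d f * V ^ i - f * (of_nat i * V ^ (i - 1) * d V)) / (V ^ i) ^ 2"
    by (simp only: d_divide d_power)
  also have "\<dots> = (d f * V - of_nat i * f * d V) / V ^ Suc i"
    using assms by (cases i) (simp_all add: field_simps power2_eq_square)
  finally show ?thesis .
qed

lemma d_sum: "d (\<Sum>j\<in>A. f j) = (\<Sum>j\<in>A. d (f j))"
  by (induction A rule: infinite_finite_induct) (simp_all add: d_add)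

lemma derivation_divide: "derivation k (\<lambda>f. d f / c)"
  by unfold_locales (simp_all add: subfield d_add d_mult d_const add_divide_distrib)

lemma subfield_constants: "subfield {f. d f = 0}"
  unfolding subfield_def by (simp add: d_add d_mult d_uminus d_inverse)

lemma d_eq_0_if_generators:
  assumes "field_generated (k \<union> S) = UNIV" and "\<And>s. s \<in> S \<Longrightarrow> d s = 0"
  shows "d f = 0"
proof -
  have "k \<union> S \<subseteq> {f. d f = 0}"
    using assms(2) d_const by blast
  then show ?thesis
    using assms(1) subfield_constants unfolding field_generated_def by blast
qed

lemma d_poly: "poly_over k p \<Longrightarrow> d (poly p t) = poly (pderiv p) t * d t"
proof (induction p)
  case (pCons a p)
  then show ?case
    by (simp add: d_add d_mult d_const pderiv_pCons algebra_simps)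
qed simp

end

lemma hasse_derivatives_derivation:
  assumes "subfield k" and "hasse_derivatives k \<tau> D"
  shows "derivation k (D 1)"
proof
  fix f g :: 'a
  have "D 1 (f * g) = (\<Sum>j\<le>1. D j f * D (1 - j) g)"
    using assms(2) unfolding hasse_derivatives_def by blast
  then show "D 1 (f * g) = f * D 1 g + D 1 f * g"
    using assms(2) unfolding hasse_derivatives_def by simp
qed (use assms in \<open>auto simp: hasse_derivatives_def\<close>)

lemma hasse_derivatives_fact:
  assumes k: "subfield k" and D: "hasse_derivatives k \<tau> D"
  shows "of_nat (fact i) * D i f = (D 1 ^^ i) f"
proof (induction i)
  case 0
  then show ?case
    using D by (simp add: hasse_derivatives_def)
next
  case (Suc i)
  interpret derivation k "D 1"
    using k D by (rule hasse_derivatives_derivation)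
  have fact_k: "of_nat (fact i) \<in> k"
    using subfield_of_nat[OF k] .
  have "(D 1 ^^ Suc i) f = D 1 (of_nat (fact i) * D i f)"
    using Suc.IH by simp
  also have "\<dots> = of_nat (fact i) * D 1 (D i f)"
    using fact_k by (rule d_cmult)
  also have "D 1 (D i f) = of_nat (Suc i) * D (Suc i) f"
    using D unfolding hasse_derivatives_def by (metis choose_one plus_1_eq_Suc)
  finally show ?case
    by (simp add: fact_Suc algebra_simps)
qed

subsection \<open>Classicality via the Wronskian\<close>

lemma upt_lexord_le:
  assumes "sorted_wrt (<) e" and "\<forall>v\<in>set e. c \<le> v" and "e \<noteq> [c..<c + length e]"
  shows "([c..<c + length e], e) \<in> lexord {(u, v). u < v}"
  using assms
proof (induction e arbitrary: c)
  case (Cons h r)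
  have upt: "[c..<c + length (h # r)] = c # [Suc c..<Suc c + length r]"
    by (simp add: upt_rec)
  show ?case
  proof (cases "h = c")
    case True
    then have "([Suc c..<Suc c + length r], r) \<in> lexord {(u, v). u < v}"
      using Cons.prems upt by (intro Cons.IH) auto
    then show ?thesis
      using upt True by simp
  next
    case False
    then show ?thesis
      using upt Cons.prems(2) by simp
  qed
qed simp

lemma classical_iff_det:
  "classical D \<phi> \<longleftrightarrow> det (hasse_matrix D \<phi> [0..<length \<phi>]) \<noteq> 0"
proof
  assume "det (hasse_matrix D \<phi> [0..<length \<phi>]) \<noteq> 0"
  then have "[0..<length \<phi>] \<in> admissible_orders D \<phi>"
    by (simp add: admissible_orders_def sorted_wrt_upt)
  moreover have "e = [0..<length \<phi>] \<or> ([0..<length \<phi>], e) \<in> lexord {(u, v). u < v}"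
    if "e \<in> admissible_orders D \<phi>" for e
    using that upt_lexord_le[of e 0] by (auto simp: admissible_orders_def)
  ultimately show "classical D \<phi>"
    by (simp add: classical_def is_order_sequence_def)
qed (simp add: classical_def is_order_sequence_def admissible_orders_def)

definition wronskian_mat :: "('K::field \<Rightarrow> 'K) \<Rightarrow> 'K list \<Rightarrow> 'K mat" where
  "wronskian_mat d \<phi> = mat (length \<phi>) (length \<phi>) (\<lambda>(i, j). (d ^^ i) (\<phi> ! j))"

text \<open>The recursion compares coefficients in (U d)^(i+1) = U d o (sum_j c_ij d^j), using the
  Leibniz rule.\<close>
primrec scaled_iter_coeff :: "'K::field \<Rightarrow> ('K \<Rightarrow> 'K) \<Rightarrow> nat \<Rightarrow> nat \<Rightarrow> 'K" where
  "scaled_iter_coeff U d 0 j = (if j = 0 then 1 else 0)"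
| "scaled_iter_coeff U d (Suc i) j =
     U * (d (scaled_iter_coeff U d i j) + (if j = 0 then 0 else scaled_iter_coeff U d i (j - 1)))"

context derivation
begin

lemma scaled_iter_coeff_above: "i < j \<Longrightarrow> scaled_iter_coeff U d i j = 0"
  by (induction i arbitrary: j) auto

lemma scaled_iter_coeff_diag: "scaled_iter_coeff U d i i = U ^ i"
  by (induction i) (auto simp: scaled_iter_coeff_above)

lemma funpow_scaled:
  "((\<lambda>f. U * d f) ^^ i) f = (\<Sum>j<Suc i. scaled_iter_coeff U d i j * (d ^^ j) f)"
proof (induction i)
  case (Suc i)
  let ?c = "scaled_iter_coeff U d i"
  have "((\<lambda>f. U * d f) ^^ Suc i) f = U * d (\<Sum>j<Suc i. ?c j * (d ^^ j) f)"
    using Suc by simp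
  also have "\<dots> = (\<Sum>j<Suc i. U * d (?c j) * (d ^^ j) f) + (\<Sum>j<Suc i. U * ?c j * (d ^^ Suc j) f)"
    unfolding d_sum
    by (simp add: d_mult sum_distrib_left sum.distrib algebra_simps del: sum.lessThan_Suc)
  also have "(\<Sum>j<Suc i. U * d (?c j) * (d ^^ j) f) = (\<Sum>j<Suc (Suc i). U * d (?c j) * (d ^^ j) f)"
    by (simp add: scaled_iter_coeff_above)
  also have "(\<Sum>j<Suc i. U * ?c j * (d ^^ Suc j) f)
      = (\<Sum>j<Suc (Suc i). U * (if j = 0 then 0 else ?c (j - 1)) * (d ^^ j) f)"
    by (subst sum.lessThan_Suc_shift) simp
  finally show ?case
    by (simp add: sum.distrib[symmetric] algebra_simps)
qed simp

lemma hasse_matrix_factor: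
  assumes "\<And>i f. i < length \<phi> \<Longrightarrow> of_nat (fact i) * D i f = ((\<lambda>f. U * d f) ^^ i) f"
    and "\<And>i. i < length \<phi> \<Longrightarrow> (of_nat (fact i) :: 'K) \<noteq> 0"
  shows "hasse_matrix D \<phi> [0..<length \<phi>]
    = mat (length \<phi>) (length \<phi>) (\<lambda>(i, j). scaled_iter_coeff U d i j / of_nat (fact i))
      * wronskian_mat d \<phi>"
    (is "_ = ?C * _")
proof (rule eq_matI)
  fix i j
  assume "i < dim_row (?C * wronskian_mat d \<phi>)" "j < dim_col (?C * wronskian_mat d \<phi>)"
  then have i: "i < length \<phi>" and j: "j < length \<phi>"
    by (auto simp: wronskian_mat_def)
  have "(?C * wronskian_mat d \<phi>) $$ (i, j)
      = (\<Sum>l<length \<phi>. scaled_iter_coeff U d i l / of_nat (fact i) * (d ^^ l) (\<phi> ! j))"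
    using i j by (simp add: wronskian_mat_def scalar_prod_def atLeast0LessThan)
  also have "\<dots> = (\<Sum>l<Suc i. scaled_iter_coeff U d i l / of_nat (fact i) * (d ^^ l) (\<phi> ! j))"
    by (rule sum.mono_neutral_right) (use i scaled_iter_coeff_above in auto)
  also have "\<dots> = (\<Sum>l<Suc i. scaled_iter_coeff U d i l * (d ^^ l) (\<phi> ! j)) / of_nat (fact i)"
    by (simp add: sum_divide_distrib del: sum.lessThan_Suc)
  also have "\<dots> = D i (\<phi> ! j)"
  proof -
    have "(\<Sum>l<Suc i. scaled_iter_coeff U d i l * (d ^^ l) (\<phi> ! j)) = of_nat (fact i) * D i (\<phi> ! j)"
      using assms(1)[OF i] by (simp only: funpow_scaled)
    then show ?thesis
      using assms(2)[OF i] by simp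
  qed
  finally show "hasse_matrix D \<phi> [0..<length \<phi>] $$ (i, j) = (?C * wronskian_mat d \<phi>) $$ (i, j)"
    using i j by (simp add: hasse_matrix_def)
qed (simp_all add: hasse_matrix_def wronskian_mat_def)

lemma classical_iff_det_wronskian:
  assumes D: "hasse_derivatives k \<tau> D" and D1: "\<And>f. D 1 f = U * d f" and U: "U \<noteq> 0"
    and fact: "\<And>i. i < length \<phi> \<Longrightarrow> (of_nat (fact i) :: 'K) \<noteq> 0"
  shows "classical D \<phi> \<longleftrightarrow> det (wronskian_mat d \<phi>) \<noteq> 0"
proof -
  let ?L = "length \<phi>"
  let ?C = "mat ?L ?L (\<lambda>(i, j). scaled_iter_coeff U d i j / of_nat (fact i))"
  have "D 1 = (\<lambda>f. U * d f)"
    using D1 by blast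
  then have "hasse_matrix D \<phi> [0..<?L] = ?C * wronskian_mat d \<phi>"
    using hasse_derivatives_fact[OF subfield D] fact by (intro hasse_matrix_factor) auto
  then have "det (hasse_matrix D \<phi> [0..<?L]) = det ?C * det (wronskian_mat d \<phi>)"
    by (simp add: det_mult[of _ ?L] wronskian_mat_def)
  moreover have "det ?C = prod_list (diag_mat ?C)"
    by (rule det_lower_triangular[of ?L]) (auto simp: scaled_iter_coeff_above)
  moreover have "prod_list (diag_mat ?C) = (\<Prod>i = 0..<?L. U ^ i / of_nat (fact i))"
    unfolding prod_list_diag_prod by (intro prod.cong) (simp_all add: scaled_iter_coeff_diag)
  moreover have "(\<Prod>i = 0..<?L. U ^ i / of_nat (fact i)) \<noteq> (0 :: 'K)"
    using U fact by (simp add: prod_zero_iff)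
  ultimately show ?thesis
    by (simp add: classical_iff_det)
qed

end

subsection \<open>The Wronskian of conics\<close>

lemma det_single_nonzero_in_col:
  fixes A :: "'a::comm_ring_1 mat"
  assumes A: "A \<in> carrier_mat n n" and i: "i < n" and j: "j < n"
    and zero: "\<And>i'. i' < n \<Longrightarrow> i' \<noteq> i \<Longrightarrow> A $$ (i', j) = 0"
  shows "det A = A $$ (i, j) * cofactor A i j"
proof -
  have "det A = (\<Sum>i'<n. A $$ (i', j) * cofactor A i' j)"
    by (rule laplace_expansion_column[OF A j])
  also have "\<dots> = (\<Sum>i'\<in>{i}. A $$ (i', j) * cofactor A i' j)"
    by (rule sum.mono_neutral_right) (use i zero in auto)
  finally show ?thesis
    by simp
qed

lemma mat_delete_mat:
  "mat_delete (mat n n f) i j =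
   mat (n - 1) (n - 1) (\<lambda>(i', j'). f (if i' < i then i' else Suc i', if j' < j then j' else Suc j'))"
  unfolding mat_delete_def by (rule eq_matI) auto

lemma det_mat_3:
  "det (mat 3 3 f :: 'a::comm_ring_1 mat) =
     f (0, 0) * (f (1, 1) * f (2, 2) - f (1, 2) * f (2, 1))
   - f (1, 0) * (f (0, 1) * f (2, 2) - f (0, 2) * f (2, 1))
   + f (2, 0) * (f (0, 1) * f (1, 2) - f (0, 2) * f (1, 1))"
proof -
  have expand: "det (mat (Suc n) (Suc n) g :: 'a mat) = (\<Sum>i<Suc n. g (i, 0) * ((-1) ^ i *
      det (mat n n (\<lambda>(i', j'). g (if i' < i then i' else Suc i', Suc j')))))" for n g
    by (subst laplace_expansion_column[of _ "Suc n" 0])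
      (auto simp: cofactor_def mat_delete_mat intro!: sum.cong)
  show ?thesis
    unfolding numeral_3_eq_3 expand by (simp add: algebra_simps numeral_2_eq_2)
qed

context derivation
begin

lemma funpow_d_mult_x:
  assumes "d x = 1"
  shows "(d ^^ Suc i) (x * y) = x * (d ^^ Suc i) y + of_nat (Suc i) * (d ^^ i) y"
  by (induction i) (simp_all add: assms d_add d_mult algebra_simps)

text \<open>Expanding along the columns of \<open>1\<close>, \<open>x\<close> and \<open>x\<^sup>2\<close> leaves the \<open>3 \<times> 3\<close> Wronskian of
  \<open>y, y\<^sup>2, x y\<close> from the second derivative on.\<close>
lemma det_wronskian_conics:
  assumes dx: "d x = 1"
  shows "det (wronskian_mat d [1, y, y^2, x, x*y, x^2]) =
    4 * (d ^^ 2) y * (9 * ((d ^^ 2) y)^2 * (d ^^ 5) y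
      - 45 * (d ^^ 2) y * (d ^^ 3) y * (d ^^ 4) y + 40 * ((d ^^ 3) y)^3)"
proof -
  define Y where "Y i = (d ^^ i) y" for i
  have const: "(d ^^ Suc i) c = 0" if "c \<in> k" for i c
    using that by (induction i) (simp_all add: d_const)
  have one: "0 < i \<Longrightarrow> (d ^^ i) 1 = 0" for i
    using const[OF subfield_1[OF subfield]] by (cases i) auto
  have x: "0 < i \<Longrightarrow> d ((d ^^ i) x) = 0" for i
    by (simp add: funpow_swap1 dx one)
  have xx: "d (d (x^2)) = 2"
    using dx by (simp add: d_power d_mult)
  have xx': "0 < i \<Longrightarrow> d (d ((d ^^ i) (x^2))) = 0" for i
    using const[where c = 2] subfield_numeral[OF subfield] by (cases i) (simp_all add: funpow_swap1 xx)
  have xy: "(d ^^ Suc i) (x * y) = x * Y (Suc i) + of_nat (Suc i) * Y i" for i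
    using funpow_d_mult_x[OF dx] unfolding Y_def by blast
  have yy: "(d ^^ 3) (y^2) = 6 * Y 1 * Y 2 + 2 * y * Y 3"
    "(d ^^ 4) (y^2) = 6 * (Y 2)^2 + 8 * Y 1 * Y 3 + 2 * y * Y 4"
    "(d ^^ 5) (y^2) = 20 * Y 2 * Y 3 + 10 * Y 1 * Y 4 + 2 * y * Y 5"
    by (simp_all add: eval_nat_numeral d_add d_mult d_power Y_def algebra_simps)
  let ?W = "mat 6 6 (\<lambda>(i, j). (d ^^ i) ([1, y, y^2, x, x*y, x^2] ! j))"
  define W1 where "W1 = mat_delete ?W 0 0"
  define W2 where "W2 = mat_delete W1 0 2"
  define W3 where "W3 = mat_delete W2 0 3"
  have W1: "W1 = mat 5 5 (\<lambda>(i, j). (d ^^ Suc i) ([y, y^2, x, x*y, x^2] ! j))"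
    unfolding W1_def mat_delete_mat by (rule eq_matI) auto
  have W2: "W2 = mat 4 4 (\<lambda>(i, j). (d ^^ Suc (Suc i)) ([y, y^2, x*y, x^2] ! j))"
    unfolding W2_def W1 mat_delete_mat by (rule eq_matI) (auto simp: nth_Cons')
  have W3: "W3 = mat 3 3 (\<lambda>(i, j). (d ^^ Suc (Suc (Suc i))) ([y, y^2, x*y] ! j))"
    unfolding W3_def W2 mat_delete_mat by (rule eq_matI) (auto simp: nth_Cons')
  have "det (wronskian_mat d [1, y, y^2, x, x*y, x^2]) = det ?W"
    by (simp add: wronskian_mat_def numeral_eq_Suc)
  also have "\<dots> = ?W $$ (0, 0) * cofactor ?W 0 0"
    by (rule det_single_nonzero_in_col) (auto simp: one)
  also have "\<dots> = det W1"
    by (simp add: cofactor_def W1_def)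
  also have "det W1 = W1 $$ (0, 2) * cofactor W1 0 2"
    unfolding W1 by (rule det_single_nonzero_in_col) (auto simp: x nth_Cons')
  also have "\<dots> = det W2"
    by (simp add: cofactor_def W2_def W1 dx)
  also have "det W2 = W2 $$ (0, 3) * cofactor W2 0 3"
    unfolding W2 by (rule det_single_nonzero_in_col) (auto simp: xx' nth_Cons')
  also have "\<dots> = - 2 * det W3"
    by (simp add: cofactor_def W3_def W2 xx)
  also have "det W3 = - 2 * Y 2 * (9 * (Y 2)^2 * Y 5 - 45 * Y 2 * Y 3 * Y 4 + 40 * (Y 3)^3)"
    unfolding W3 det_mat_3 using xy[of 2] xy[of 3] xy[of 4] yy
    by (simp add: Y_def eval_nat_numeral algebra_simps)
  finally show ?thesis
    by (simp add: Y_def mult.assoc)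
qed

end

subsection \<open>Derivatives on the curve \<open>a x\<^sup>n + b y\<^sup>m = 1\<close>\<close>

primrec fermat_deriv_poly :: "'K::field \<Rightarrow> 'K \<Rightarrow> nat \<Rightarrow> 'K poly" where
  "fermat_deriv_poly N M 0 = 1"
| "fermat_deriv_poly N M (Suc i) =
     smult (of_nat i * M) ([:-1, N + 1:] * fermat_deriv_poly N M i)
     - [:0, N:] * fermat_deriv_poly N M i
     + smult (M * N) ([:0, 1, -1:] * pderiv (fermat_deriv_poly N M i))"

definition fermat_wronskian_poly :: "'K::field \<Rightarrow> 'K \<Rightarrow> 'K poly" where
  "fermat_wronskian_poly N M = (let P = fermat_deriv_poly N M in
     P 2 * (smult 9 (P 2 ^ 2 * P 5) - smult 45 (P 2 * P 3 * P 4) + smult 40 (P 3 ^ 3)))"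

lemma poly_over_fermat_deriv_poly:
  assumes F: "subfield F" and NM: "N \<in> F" "M \<in> F"
  shows "poly_over F (fermat_deriv_poly N M i)"
proof (induction i)
  case (Suc i)
  show ?case
    unfolding fermat_deriv_poly.simps
    by (intro poly_over_add[OF F] poly_over_diff[OF F] poly_over_smult[OF F] poly_over_mult[OF F]
        poly_over_pderiv[OF F] subfield_mult[OF F] subfield_of_nat[OF F] Suc.IH)
      (simp_all add: F NM subfield_0[OF F] subfield_1[OF F] subfield_add[OF F] subfield_uminus[OF F])
qed (simp add: F)

lemma poly_over_fermat_wronskian_poly:
  assumes F: "subfield F" and NM: "N \<in> F" "M \<in> F"
  shows "poly_over F (fermat_wronskian_poly N M)"
  unfolding fermat_wronskian_poly_def Let_def
  by (intro poly_over_add[OF F] poly_over_diff[OF F] poly_over_mult[OF F] poly_over_smult[OF F]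
      poly_over_power[OF F] poly_over_fermat_deriv_poly[OF F NM] subfield_numeral[OF F])

lemma fermat_deriv_poly_2: "fermat_deriv_poly N M 2 = [:0, N * M - N^2 * M, - N * M + N^2:]"
  by (simp add: numeral_2_eq_2 pderiv_pCons algebra_simps power2_eq_square)

lemma fermat_deriv_poly_3: "fermat_deriv_poly N M 3 =
  [:0,
    - 2 * N * M^2 + 3 * N^2 * M^2 - N^3 * M^2,
    4 * N * M^2 - 3 * N^2 * M - 3 * N^2 * M^2 + 3 * N^3 * M - N^3 * M^2,
    - 2 * N * M^2 + 3 * N^2 * M - N^3:]"
  by (simp add: eval_nat_numeral fermat_deriv_poly_2 pderiv_pCons algebra_simps power2_eq_square)

lemma fermat_deriv_poly_4: "fermat_deriv_poly N M 4 =
  [:0,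
    6 * N * M^3 - 11 * N^2 * M^3 + 6 * N^3 * M^3 - N^4 * M^3,
    - 18 * N * M^3 + 11 * N^2 * M^2 + 22 * N^2 * M^3 - 18 * N^3 * M^2 + 7 * N^4 * M^2
      - 4 * N^4 * M^3,
    18 * N * M^3 - 22 * N^2 * M^2 - 11 * N^2 * M^3 + 6 * N^3 * M + 18 * N^3 * M^2 - 6 * N^3 * M^3
      - 6 * N^4 * M + 4 * N^4 * M^2 - N^4 * M^3,
    - 6 * N * M^3 + 11 * N^2 * M^2 - 6 * N^3 * M + N^4:]"
  by (simp add: eval_nat_numeral fermat_deriv_poly_3 pderiv_pCons algebra_simps)

lemma fermat_deriv_poly_5: "fermat_deriv_poly N M 5 =
  [:0,
    - 24 * N * M^4 + 50 * N^2 * M^4 - 35 * N^3 * M^4 + 10 * N^4 * M^4 - N^5 * M^4,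
    96 * N * M^4 - 50 * N^2 * M^3 - 150 * N^2 * M^4 + 105 * N^3 * M^3 + 35 * N^3 * M^4
      - 70 * N^4 * M^3 + 30 * N^4 * M^4 + 15 * N^5 * M^3 - 11 * N^5 * M^4,
    - 144 * N * M^4 + 150 * N^2 * M^3 + 150 * N^2 * M^4 - 35 * N^3 * M^2 - 210 * N^3 * M^3
      + 35 * N^3 * M^4 + 60 * N^4 * M^2 + 30 * N^4 * M^3 - 30 * N^4 * M^4 - 25 * N^5 * M^2
      + 30 * N^5 * M^3 - 11 * N^5 * M^4,
    96 * N * M^4 - 150 * N^2 * M^3 - 50 * N^2 * M^4 + 70 * N^3 * M^2 + 105 * N^3 * M^3
      - 35 * N^3 * M^4 - 10 * N^4 * M - 60 * N^4 * M^2 + 40 * N^4 * M^3 - 10 * N^4 * M^4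
      + 10 * N^5 * M - 10 * N^5 * M^2 + 5 * N^5 * M^3 - N^5 * M^4,
    - 24 * N * M^4 + 50 * N^2 * M^3 - 35 * N^3 * M^2 + 10 * N^4 * M - N^5:]"
  by (simp add: eval_nat_numeral fermat_deriv_poly_4 pderiv_pCons algebra_simps)

definition scaled_wronskian_poly :: "'K::field \<Rightarrow> 'K \<Rightarrow> 'K poly" where
  "scaled_wronskian_poly X Y = [:0, 0, 0, 0,
      512 * X^4 * Y^7 - 1408 * X^5 * Y^7 + 1344 * X^6 * Y^7 - 384 * X^7 * Y^7 - 192 * X^8 * Y^7
        + 168 * X^9 * Y^7 - 44 * X^10 * Y^7 + 4 * X^11 * Y^7,
      - 3584 * X^4 * Y^7 + 5632 * X^5 * Y^6 + 8448 * X^5 * Y^7 - 12672 * X^6 * Y^6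
        - 6240 * X^6 * Y^7 + 8448 * X^7 * Y^6 + 576 * X^7 * Y^7 + 1344 * X^8 * Y^7
        - 2112 * X^9 * Y^6 - 648 * X^9 * Y^7 + 792 * X^10 * Y^6 + 110 * X^10 * Y^7
        - 88 * X^11 * Y^6 - 6 * X^11 * Y^7,
      10752 * X^4 * Y^7 - 33792 * X^5 * Y^6 - 21120 * X^5 * Y^7 + 21504 * X^6 * Y^5
        + 63360 * X^6 * Y^6 + 11040 * X^6 * Y^7 - 33792 * X^7 * Y^5 - 29952 * X^7 * Y^6
        + 1536 * X^7 * Y^7 + 7680 * X^8 * Y^5 - 5760 * X^8 * Y^6 - 3072 * X^8 * Y^7
        + 7680 * X^9 * Y^5 + 8352 * X^9 * Y^6 + 960 * X^9 * Y^7 - 3264 * X^10 * Y^5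
        - 2520 * X^10 * Y^6 - 90 * X^10 * Y^7 + 192 * X^11 * Y^5 + 312 * X^11 * Y^6
        - 6 * X^11 * Y^7,
      - 17920 * X^4 * Y^7 + 84480 * X^5 * Y^6 + 28160 * X^5 * Y^7 - 107520 * X^6 * Y^5
        - 126720 * X^6 * Y^6 - 8640 * X^6 * Y^7 + 24576 * X^7 * Y^4 + 135168 * X^7 * Y^5
        + 35328 * X^7 * Y^6 - 4224 * X^7 * Y^7 - 9600 * X^8 * Y^5 + 17280 * X^8 * Y^6
        + 3000 * X^8 * Y^7 - 42240 * X^9 * Y^4 - 30720 * X^9 * Y^5 - 10320 * X^9 * Y^6
        - 720 * X^9 * Y^7 + 23040 * X^10 * Y^4 + 9120 * X^10 * Y^5 + 2160 * X^10 * Y^6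
        + 70 * X^10 * Y^7 - 2496 * X^11 * Y^4 - 768 * X^11 * Y^5 - 228 * X^11 * Y^6
        + 4 * X^11 * Y^7,
      17920 * X^4 * Y^7 - 112640 * X^5 * Y^6 - 21120 * X^5 * Y^7 + 215040 * X^6 * Y^5
        + 126720 * X^6 * Y^6 + 1920 * X^6 * Y^7 - 98304 * X^7 * Y^4 - 202752 * X^7 * Y^5
        - 10752 * X^7 * Y^6 + 3456 * X^7 * Y^7 - 49152 * X^8 * Y^3 - 17280 * X^8 * Y^5
        - 17280 * X^8 * Y^6 - 1128 * X^8 * Y^7 + 135168 * X^9 * Y^3 + 111360 * X^9 * Y^4
        + 38400 * X^9 * Y^5 + 3600 * X^9 * Y^6 + 312 * X^9 * Y^7 - 98304 * X^10 * Y^3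
        - 46080 * X^10 * Y^4 - 3360 * X^10 * Y^5 - 720 * X^10 * Y^6 - 46 * X^10 * Y^7
        + 21504 * X^11 * Y^3 + 1344 * X^11 * Y^4 + 192 * X^11 * Y^5 + 92 * X^11 * Y^6,
      - 10752 * X^4 * Y^7 + 84480 * X^5 * Y^6 + 8448 * X^5 * Y^7 - 215040 * X^6 * Y^5
        - 63360 * X^6 * Y^6 + 1056 * X^6 * Y^7 + 147456 * X^7 * Y^4 + 135168 * X^7 * Y^5
        - 6912 * X^7 * Y^6 - 960 * X^7 * Y^7 + 147456 * X^8 * Y^3 + 32640 * X^8 * Y^5
        + 5760 * X^8 * Y^6 - 24 * X^8 * Y^7 - 172032 * X^9 * Y^2 - 270336 * X^9 * Y^3
        - 96000 * X^9 * Y^4 - 15360 * X^9 * Y^5 + 912 * X^9 * Y^6 - 72 * X^9 * Y^7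
        + 202752 * X^10 * Y^2 + 129024 * X^10 * Y^3 + 23040 * X^10 * Y^4 - 3360 * X^10 * Y^5
        + 288 * X^10 * Y^6 - 58368 * X^11 * Y^2 - 15360 * X^11 * Y^3 + 3264 * X^11 * Y^4
        - 288 * X^11 * Y^5,
      3584 * X^4 * Y^7 - 33792 * X^5 * Y^6 - 1408 * X^5 * Y^7 + 107520 * X^6 * Y^5
        + 12672 * X^6 * Y^6 - 480 * X^6 * Y^7 - 98304 * X^7 * Y^4 - 33792 * X^7 * Y^5
        + 3840 * X^7 * Y^6 - 147456 * X^8 * Y^3 - 13440 * X^8 * Y^5 + 72 * X^8 * Y^7
        + 344064 * X^9 * Y^2 + 135168 * X^9 * Y^3 + 26880 * X^9 * Y^4 - 432 * X^9 * Y^6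
        - 180224 * X^10 * Y - 202752 * X^10 * Y^2 - 30720 * X^10 * Y^3 + 864 * X^10 * Y^5
        + 90112 * X^11 * Y + 15360 * X^11 * Y^2 - 576 * X^11 * Y^4,
      - 512 * X^4 * Y^7 + 5632 * X^5 * Y^6 - 21504 * X^6 * Y^5 + 24576 * X^7 * Y^4
        + 49152 * X^8 * Y^3 - 172032 * X^9 * Y^2 + 180224 * X^10 * Y - 65536 * X^11:]"

lemma fermat_wronskian_poly_scaled:
  "smult (2 ^ 25) (fermat_wronskian_poly N M) = scaled_wronskian_poly (2 * N) (4 * M)"
  unfolding fermat_wronskian_poly_def Let_def scaled_wronskian_poly_def
    fermat_deriv_poly_2 fermat_deriv_poly_3 fermat_deriv_poly_4 fermat_deriv_poly_5
  by (simp add: algebra_simps eval_nat_numeral)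

context derivation
begin

lemma d_monomial:
  assumes "a \<in> k"
  shows "x * d (a * x ^ n) = of_nat n * (a * x ^ n) * d x"
proof (cases "n = 0")
  case False
  have "x * d (a * x ^ n) = of_nat n * a * (x ^ (n - 1) * x) * d x"
    using assms by (simp add: d_cmult d_power mult_ac)
  also have "x ^ (n - 1) * x = x ^ n"
    using False by (intro power_minus_mult) simp
  finally show ?thesis
    by (simp add: mult_ac)
qed (simp add: assms d_const)

lemma d_fermat_curve:
  assumes ab: "a \<in> k" "b \<in> k" and curve: "a * x ^ n + b * y ^ m = 1"
  shows "of_nat n * (a * x ^ n) * y * d x + of_nat m * (1 - a * x ^ n) * x * d y = 0"
proof -
  have "0 = x * y * (d (a * x ^ n) + d (b * y ^ m))"
    using arg_cong[OF curve, of d] by (simp add: d_add)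
  also have "\<dots> = y * (x * d (a * x ^ n)) + x * (y * d (b * y ^ m))"
    by (simp add: algebra_simps)
  also have "\<dots> = y * (of_nat n * (a * x ^ n) * d x) + x * (of_nat m * (b * y ^ m) * d y)"
    by (simp only: d_monomial ab)
  also have "b * y ^ m = 1 - a * x ^ n"
    using curve by (simp add: algebra_simps)
  finally show ?thesis
    by (simp add: algebra_simps)
qed

lemma funpow_d_fermat_curve:
  assumes NM: "N \<in> k" "M \<in> k" and nonzero: "x \<noteq> 0" "M \<noteq> 0" "u \<noteq> 1"
    and dx: "d x = 1" and du: "d u = N * u / x" and dy: "d y = - N * u * y / (M * x * (1 - u))"
  shows "(d ^^ i) y = y * poly (fermat_deriv_poly N M i) u / (M * x * (1 - u)) ^ i"
proof (induction i)
  case (Suc i)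
  define P where "P = fermat_deriv_poly N M i"
  define V where "V = M * x * (1 - u)"
  have V: "V \<noteq> 0"
    using nonzero by (simp add: V_def)
  have dV: "d V = M * (1 - u - N * u)"
    using nonzero by (simp add: V_def NM d_const d_mult d_diff dx du field_simps)
  have dP: "d (poly P u) = poly (pderiv P) u * (N * u / x)"
    unfolding P_def du[symmetric] using subfield NM by (intro d_poly poly_over_fermat_deriv_poly)
  have "(d ^^ Suc i) y = d (y * poly P u / V ^ i)"
    using Suc.IH by (simp add: P_def V_def)
  also have "\<dots> = (d (y * poly P u) * V - of_nat i * (y * poly P u) * d V) / V ^ Suc i"
    using V by (rule d_divide_power)
  also have "\<dots> = y * poly (fermat_deriv_poly N M (Suc i)) u / V ^ Suc i"
  proof -
    have recurrence: "poly (fermat_deriv_poly N M (Suc i)) u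
        = of_nat i * M * ((N + 1) * u - 1) * poly P u - N * u * poly P u
          + M * N * u * (1 - u) * poly (pderiv P) u"
      by (simp add: P_def algebra_simps)
    have "d (y * poly P u) * V - of_nat i * (y * poly P u) * d V
        = y * poly (fermat_deriv_poly N M (Suc i)) u"
      unfolding recurrence using V nonzero
      by (simp add: d_mult dy dP dV flip: V_def) (simp add: V_def field_simps)
    then show ?thesis
      by simp
  qed
  finally show ?case
    by (simp add: V_def)
qed simp

lemma det_wronskian_fermat_curve:
  assumes NM: "N \<in> k" "M \<in> k" and nonzero: "x \<noteq> 0" "M \<noteq> 0" "u \<noteq> 1"
    and dx: "d x = 1" and du: "d u = N * u / x" and dy: "d y = - N * u * y / (M * x * (1 - u))"
  shows "det (wronskian_mat d [1, y, y^2, x, x*y, x^2])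
    = 4 * y ^ 4 * poly (fermat_wronskian_poly N M) u / (M * x * (1 - u)) ^ 11"
proof -
  define V where "V = M * x * (1 - u)"
  define P where "P i = poly (fermat_deriv_poly N M i) u" for i
  have V: "V \<noteq> 0"
    using nonzero by (simp add: V_def)
  have W: "poly (fermat_wronskian_poly N M) u
      = P 2 * (9 * P 2 ^ 2 * P 5 - 45 * P 2 * P 3 * P 4 + 40 * P 3 ^ 3)"
    by (simp add: fermat_wronskian_poly_def Let_def P_def)
  have Y: "(d ^^ i) y = y * P i / V ^ i" for i
    unfolding P_def V_def by (rule funpow_d_fermat_curve[OF assms])
  show ?thesis
    unfolding det_wronskian_conics[OF dx] Y W V_def[symmetric] using V
    by (simp add: field_simps) (simp add: algebra_simps eval_nat_numeral)
qed

end

subsection \<open>Vanishing of the Wronskian polynomial\<close>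

lemma of_nat_neq_0_below_char:
  "0 < q \<Longrightarrow> q < CHAR('a::semiring_1) \<Longrightarrow> (of_nat q :: 'a) \<noteq> 0"
  by (auto simp: of_nat_eq_0_iff_char_dvd dest: dvd_imp_le)

lemma fact_neq_0_below_char:
  "prime CHAR('a::semiring_1) \<Longrightarrow> i < CHAR('a) \<Longrightarrow> (of_nat (fact i) :: 'a) \<noteq> 0"
  by (simp add: of_nat_eq_0_iff_char_dvd prime_dvd_fact_iff)

text \<open>Conditions (a)--(e) of the theorem for \<open>X = 2 n\<close> and \<open>Y = 4 m\<close>; the scaling keeps all
  candidate pairs, among them \<open>n = 1/2\<close> and \<open>m = n/2\<close>, integral.\<close>
definition exceptional_pair :: "'K::field \<Rightarrow> 'K \<Rightarrow> bool" where
  "exceptional_pair X Y \<longleftrightarrow> (X = 4 \<and> Y = 8) \<or> (X = -2 \<and> Y = -4) \<or> (X = 1 \<and> Y = 2)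
     \<or> (Y = 4 \<and> (X = 2 \<or> X = 4 \<or> X = 1 \<or> X = -2))
     \<or> (X = 2 \<and> (Y = -4 \<or> Y = 8 \<or> Y = 2))"

lemma scaled_wronskian_poly_eq_0_iff:
  fixes X Y :: "'K::field"
  assumes char: "(2::'K) \<noteq> 0" "(3::'K) \<noteq> 0" "(5::'K) \<noteq> 0" and XY: "X \<noteq> 0" "Y \<noteq> 0"
  shows "scaled_wronskian_poly X Y = 0 \<longleftrightarrow> exceptional_pair X Y"
proof
  have smooth: "(2 ^ a * 3 ^ b * 5 ^ c :: 'K) \<noteq> 0" for a b c
    using char by simp
  assume zero: "scaled_wronskian_poly X Y = 0"
  have "coeff (scaled_wronskian_poly X Y) 4 = 4 * X^4 * Y^7 * (X - 2)^4 * (X + 2) * (X - 4) * (X - 1)"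
    by (simp add: scaled_wronskian_poly_def algebra_simps eval_nat_numeral)
  then have X: "X = 2 \<or> X = -2 \<or> X = 4 \<or> X = 1"
    using zero XY smooth[of 2 0 0] by (simp add: eq_neg_iff_add_eq_0)
  have "coeff (scaled_wronskian_poly X Y) 11 = - 512 * X^4 * (Y - 2*X)^4 * (Y + 2*X) * (Y - 4*X) * (Y - X)"
    by (simp add: scaled_wronskian_poly_def algebra_simps eval_nat_numeral)
  then have Y: "Y = 2 * X \<or> Y = -2 * X \<or> Y = 4 * X \<or> Y = X"
    using zero XY smooth[of 9 0 0] by (simp add: eq_neg_iff_add_eq_0)
  have "coeff (scaled_wronskian_poly X Y) 7 \<noteq> 0"
    if "(X, Y) \<in> {(-2, -8), (-2, -2), (4, -8), (4, 16), (1, -2), (1, 1)}"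
    using that smooth[of 32 3 1] smooth[of 22 3 1] smooth[of 38 3 1] smooth[of 44 3 1]
      smooth[of 9 3 2] smooth[of 1 3 1]
    by (auto simp: scaled_wronskian_poly_def eval_nat_numeral)
  with X Y zero show "exceptional_pair X Y"
    by (auto simp: exceptional_pair_def)
next
  assume "exceptional_pair X Y"
  then show "scaled_wronskian_poly X Y = 0"
    by (auto simp: exceptional_pair_def scaled_wronskian_poly_def)
qed

lemma divisibility_conditions_iff_exceptional_pair:
  fixes n m :: nat
  assumes two: "(2::'K::field) \<noteq> 0" and m: "2 < m" "m \<le> n"
  shows "(CHAR('K) dvd (m - 2) \<and> CHAR('K) dvd (n - 2)) \<or>
     (CHAR('K) dvd (m + 1) \<and> CHAR('K) dvd (n + 1)) \<or>
     (CHAR('K) dvd (2 * m - 1) \<and> CHAR('K) dvd (2 * n - 1)) \<or>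
     (CHAR('K) dvd (m - 1) \<and> CHAR('K) dvd ((n - 1) * (n - 2) * (2 * n - 1) * (n + 1))) \<or>
     (CHAR('K) dvd (n - 1) \<and> CHAR('K) dvd ((m + 1) * (m - 2) * (2 * m - 1)))
   \<longleftrightarrow> exceptional_pair (2 * of_nat n :: 'K) (4 * of_nat m)"
proof -
  define N M where "N = (of_nat n :: 'K)" and "M = (of_nat m :: 'K)"
  have dvd: "CHAR('K) dvd z \<longleftrightarrow> (of_nat z :: 'K) = 0" for z
    by (simp add: of_nat_eq_0_iff_char_dvd)
  have diff: "of_nat (m - 2) = M - 2" "of_nat (n - 2) = N - 2" "of_nat (m - 1) = M - 1"
    "of_nat (n - 1) = N - 1" "of_nat (2 * m - 1) = 2 * M - 1" "of_nat (2 * n - 1) = 2 * N - 1"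
    using m by (auto simp: M_def N_def of_nat_diff)
  have four: "(4::'K) \<noteq> 0"
    using two mult_eq_0_iff[of "2::'K" 2] by simp
  have cancel2: "2 * A = 2 * B \<longleftrightarrow> A = B" and cancel4: "4 * A = 4 * B \<longleftrightarrow> A = B" for A B :: 'K
    using two four by simp_all
  have scaled: "M - 2 = 0 \<longleftrightarrow> 4 * M = 8" "N - 2 = 0 \<longleftrightarrow> 2 * N = 4"
    "M + 1 = 0 \<longleftrightarrow> 4 * M = -4" "N + 1 = 0 \<longleftrightarrow> 2 * N = -2"
    "2 * M - 1 = 0 \<longleftrightarrow> 4 * M = 2" "2 * N - 1 = 0 \<longleftrightarrow> 2 * N = 1"
    "M - 1 = 0 \<longleftrightarrow> 4 * M = 4" "N - 1 = 0 \<longleftrightarrow> 2 * N = 2"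
    using cancel2[of N 2] cancel2[of N "-1"] cancel2[of "2 * M" 1] cancel2[of N 1]
      cancel4[of M 2] cancel4[of M "-1"] cancel4[of M 1]
    by (auto simp: add_eq_0_iff2)
  show ?thesis
    unfolding dvd of_nat_mult diff of_nat_add of_nat_1 mult_eq_0_iff
      M_def[symmetric] N_def[symmetric] scaled exceptional_pair_def
    by auto
qed

lemma monomials_2: "monomials 2 x y = [1, y, y^2, x, x*y, x^2]"
  by (simp add: monomials_def upt_rec power2_eq_square)

lemma classical_fermat_curve_iff:
  fixes k :: "'K::field set"
  assumes k: "subfield k" and D: "hasse_derivatives k \<tau> D"
    and generated: "field_generated (k \<union> {x, y}) = UNIV"
    and fact: "\<And>i. i < 6 \<Longrightarrow> (of_nat (fact i) :: 'K) \<noteq> 0"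
    and ab: "a \<in> k" "b \<in> k" "a \<noteq> 0" and nm: "0 < n" "0 < m" "(of_nat m :: 'K) \<noteq> 0"
    and x: "transcendental_over k x" and curve: "a * x ^ n + b * y ^ m = 1"
  shows "classical D (monomials 2 x y) \<longleftrightarrow> fermat_wronskian_poly (of_nat n) (of_nat m :: 'K) \<noteq> 0"
proof -
  define N M u where "N = (of_nat n :: 'K)" and "M = (of_nat m :: 'K)" and "u = a * x ^ n"
  have NM: "N \<in> k" "M \<in> k"
    by (simp_all add: N_def M_def subfield_of_nat[OF k])
  have u: "transcendental_over k u"
    unfolding u_def by (rule transcendental_over_monomial[OF k x ab(1,3) nm(1)])
  have nonzero: "x \<noteq> 0" "u \<noteq> 1" "y \<noteq> 0" "M \<noteq> 0"
    using transcendental_over_not_in[OF k x subfield_0[OF k]] nm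
      transcendental_over_not_in[OF k u subfield_1[OF k]] curve
    by (auto simp: u_def M_def zero_power)
  have four: "(4::'K) \<noteq> 0"
    using fact[of 2] mult_eq_0_iff[of "2::'K" 2] by (simp add: eval_nat_numeral)
  interpret D1: derivation k "D 1"
    using k D by (rule hasse_derivatives_derivation)
  have D1_curve: "N * u * y * D 1 x + M * (1 - u) * x * D 1 y = 0"
    using D1.d_fermat_curve[OF ab(1,2) curve] by (simp add: N_def M_def u_def)
  have D1x: "D 1 x \<noteq> 0"
  proof
    assume "D 1 x = 0"
    with D1_curve nonzero have "D 1 y = 0"
      by simp
    have "D 1 \<tau> = 0"
      by (rule D1.d_eq_0_if_generators[OF generated]) (use \<open>D 1 x = 0\<close> \<open>D 1 y = 0\<close> in auto)
    moreover have "D 1 \<tau> = 1"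
      using D unfolding hasse_derivatives_def by blast
    ultimately show False
      by simp
  qed
  define d where "d f = D 1 f / D 1 x" for f
  interpret derivation k d
    unfolding d_def by (rule D1.derivation_divide)
  have dx: "d x = 1"
    using D1x by (simp add: d_def)
  have du: "d u = N * u / x"
    using d_monomial[OF ab(1), of x n] dx nonzero by (simp add: u_def N_def field_simps)
  have dy: "d y = - N * u * y / (M * x * (1 - u))"
    using D1_curve D1x nonzero by (simp add: d_def field_simps)
  have "classical D (monomials 2 x y) \<longleftrightarrow> det (wronskian_mat d [1, y, y^2, x, x*y, x^2]) \<noteq> 0"
    unfolding monomials_2
    by (rule classical_iff_det_wronskian[OF D, of "D 1 x"]) (use D1x fact in \<open>simp_all add: d_def\<close>)
  also have "\<dots> \<longleftrightarrow> poly (fermat_wronskian_poly N M) u \<noteq> 0"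
    using nonzero four by (simp add: det_wronskian_fermat_curve[OF NM nonzero(1,4,2) dx du dy])
  also have "\<dots> \<longleftrightarrow> fermat_wronskian_poly N M \<noteq> 0"
    using transcendental_over_poly_eq_0_iff[OF k u poly_over_fermat_wronskian_poly[OF k NM]] by simp
  finally show ?thesis
    by (simp add: N_def M_def)
qed

theorem theorem3p5:
  fixes p h n m :: nat and k :: "'K::field set" and a b x y \<tau> :: 'K
    and D :: "nat \<Rightarrow> 'K \<Rightarrow> 'K"
  assumes "prime p" and "p > 5" and "h \<ge> 1" and "CHAR('K) = p"
    and "k = {c. \<exists>e\<ge>1. c ^ (p ^ e) = c}"
    and "algebraically_closed_subfield k"
    and "a ^ (p ^ h) = a" and "a \<noteq> 0" and "b ^ (p ^ h) = b" and "b \<noteq> 0"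
    and "m > 2" and "n \<ge> m" and "\<not> p dvd (m * n)"
    and "transcendental_over k x"
    and "a * x ^ n + b * y ^ m = 1"
    and "field_generated (k \<union> {x, y}) = UNIV"
    and "hasse_derivatives k \<tau> D"
  shows "nonclassical D (monomials 2 x y) \<longleftrightarrow>
     (p dvd (m - 2) \<and> p dvd (n - 2)) \<or>
     (p dvd (m + 1) \<and> p dvd (n + 1)) \<or>
     (p dvd (2 * m - 1) \<and> p dvd (2 * n - 1)) \<or>
     (p dvd (m - 1) \<and> p dvd ((n - 1) * (n - 2) * (2 * n - 1) * (n + 1))) \<or>
     (p dvd (n - 1) \<and> p dvd ((m + 1) * (m - 2) * (2 * m - 1)))"
proof -
  have k: "subfield k"
    using assms(6) by (simp add: algebraically_closed_subfield_def)
  have ab: "a \<in> k" "b \<in> k"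
    using assms(3,5,7,9) by auto
  have small: "(of_nat q :: 'K) \<noteq> 0" if "0 < q" "q \<le> 5" for q
    using of_nat_neq_0_below_char[where 'a = 'K, of q] that assms(2,4) by simp
  have char: "(2::'K) \<noteq> 0" "(3::'K) \<noteq> 0" "(5::'K) \<noteq> 0"
    using small[of 2] small[of 3] small[of 5] by simp_all
  have NM: "(of_nat n :: 'K) \<noteq> 0" "(of_nat m :: 'K) \<noteq> 0"
    using assms(4,13) by (auto simp: of_nat_eq_0_iff_char_dvd)
  have XY: "(2 * of_nat n :: 'K) \<noteq> 0" "(4 * of_nat m :: 'K) \<noteq> 0"
    using char(1) NM mult_eq_0_iff[of "2::'K" 2] by simp_all
  have "classical D (monomials 2 x y) \<longleftrightarrow> fermat_wronskian_poly (of_nat n) (of_nat m) \<noteq> (0 :: 'K poly)"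
    using assms(1,2,4,8,11,12,14-17) NM fact_neq_0_below_char[where 'a = 'K]
    by (intro classical_fermat_curve_iff[OF k _ _ _ ab]) auto
  also have "\<dots> \<longleftrightarrow> scaled_wronskian_poly (2 * of_nat n) (4 * of_nat m) \<noteq> (0 :: 'K poly)"
    using power_not_zero[OF char(1), of 25] by (simp flip: fermat_wronskian_poly_scaled)
  also have "\<dots> \<longleftrightarrow> \<not> exceptional_pair (2 * of_nat n :: 'K) (4 * of_nat m)"
    using scaled_wronskian_poly_eq_0_iff[OF char XY] by simp
  finally show ?thesis
    using divisibility_conditions_iff_exceptional_pair[OF char(1) assms(11,12)] assms(4)
    by (simp add: nonclassical_def)
qed

end
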